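(* Let $\lambda_1,\lambda_2,\sigma_1,\sigma_2\in\mathbb{C}^*$ and $\eta_1,\eta_2\in\mathbb{C}$ with $\lambda_1\neq\lambda_2$. Then the $\mathcal{G}$-submodule of $\Omega(\lambda_1,\eta_1,\sigma_1,0)\otimes\Omega(\lambda_2,\eta_2,\sigma_2,0)$ generated by $1\otimes 1$ is the whole module $\Omega(\lambda_1,\eta_1,\sigma_1,0)\otimes\Omega(\lambda_2,\eta_2,\sigma_2,0)$.
   Context: The planar Galilean conformal algebra $\mathcal{G}$ is the complex Lie algebra with basis $\{L_m,H_m,I_m,J_m\mid m\in\mathbb{Z}\}$ and brackets $[L_m,L_n]=(n-m)L_{m+n}$, $[L_m,H_n]=nH_{m+n}$, $[L_m,I_n]=(n-m)I_{m+n}$, $[L_m,J_n]=(n-m)J_{m+n}$, $[H_m,I_n]=I_{m+n}$, $[H_m,J_n]=-J_{m+n}$, and $[H_m,H_n]=[I_m,I_n]=[J_m,J_n]=[I_m,J_n]=0$ for all $m,n\in\mathbb{Z}$. For $\lambda,\sigma\in\mathbb{C}^*$, $\eta\in\mathbb{C}$, the module $\Omega(\lambda,\eta,\sigma,0)$ is a polynomial algebra $\mathbb{C}[X,Y]$ with $L_m f(X,Y)=\lambda^m(Y-mX+m\eta)f(X,Y-m)$, $H_m f(X,Y)=\lambda^m X f(X,Y-m)$, $I_m f(X,Y)=\lambda^m\sigma f(X-1,Y-m)$, $J_m f(X,Y)=0$. The tensor product of $\mathcal{G}$-modules has action $x(v\otimes w)=xv\otimes w+v\otimes xw$. *)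

theory Defs
  imports Complex_Main
begin

datatype gbasis = L int | H int | I int | J int

text \<open>Polynomials in C[X,Y] represented as polynomial functions (faithful, C infinite).
  A point is (X,Y).\<close>
definition poly2 :: "(complex \<times> complex \<Rightarrow> complex) \<Rightarrow> bool" where
  "poly2 f \<longleftrightarrow> (\<exists>(n::nat) c. f = (\<lambda>(x,y). \<Sum>i\<le>n. \<Sum>j\<le>n. c i j * x ^ i * y ^ j))"

fun omega_act :: "complex \<Rightarrow> complex \<Rightarrow> complex \<Rightarrow> gbasis
    \<Rightarrow> (complex \<times> complex \<Rightarrow> complex) \<Rightarrow> (complex \<times> complex \<Rightarrow> complex)" where
  "omega_act lam eta sig (L m) f =
     (\<lambda>(x,y). lam powi m * (y - of_int m * x + of_int m * eta) * f (x, y - of_int m))"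
| "omega_act lam eta sig (H m) f = (\<lambda>(x,y). lam powi m * x * f (x, y - of_int m))"
| "omega_act lam eta sig (I m) f = (\<lambda>(x,y). lam powi m * sig * f (x - 1, y - of_int m))"
| "omega_act lam eta sig (J m) f = (\<lambda>_. 0)"

text \<open>The tensor product C[X,Y] (x) C[X,Y], realised as functions F p q that are
  finite sums of products f_i(p) g_i(q) of polynomials.\<close>
definition tensor_space :: "(complex \<times> complex \<Rightarrow> complex \<times> complex \<Rightarrow> complex) set" where
  "tensor_space = {F. \<exists>(n::nat) f g. (\<forall>i<n. poly2 (f i) \<and> poly2 (g i)) \<and>
                         F = (\<lambda>p q. \<Sum>i<n. f i p * g i q)}"

definition tensor_act ::
  "complex \<Rightarrow> complex \<Rightarrow> complex \<Rightarrow> complex \<Rightarrow> complex \<Rightarrow> complex \<Rightarrow> gbasis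
   \<Rightarrow> (complex \<times> complex \<Rightarrow> complex \<times> complex \<Rightarrow> complex)
   \<Rightarrow> (complex \<times> complex \<Rightarrow> complex \<times> complex \<Rightarrow> complex)" where
  "tensor_act l1 e1 s1 l2 e2 s2 b F =
     (\<lambda>p q. omega_act l1 e1 s1 b (\<lambda>p'. F p' q) p + omega_act l2 e2 s2 b (\<lambda>q'. F p q') q)"

type_synonym tvec = "complex \<times> complex \<Rightarrow> complex \<times> complex \<Rightarrow> complex"

inductive_set gen_submodule ::
  "(gbasis \<Rightarrow> tvec \<Rightarrow> tvec) \<Rightarrow> tvec \<Rightarrow> tvec set" for act v where
  base: "v \<in> gen_submodule act v"
| zero: "(\<lambda>p q. 0) \<in> gen_submodule act v"
| add: "a \<in> gen_submodule act v \<Longrightarrow> b \<in> gen_submodule act v \<Longrightarrow>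
          (\<lambda>p q. a p q + b p q) \<in> gen_submodule act v"
| smult: "a \<in> gen_submodule act v \<Longrightarrow> (\<lambda>p q. c * a p q) \<in> gen_submodule act v"
| act: "a \<in> gen_submodule act v \<Longrightarrow> act x a \<in> gen_submodule act v"

end

theory Submission
  imports Defs "HOL-Library.Product_Plus"
begin

text \<open>
  The tensor product is the polynomial ring in X1, Y1, X2, Y2, where
  p = (X1, Y1) and q = (X2, Y2). Every basis element raises the total degree by at most
  one, so the submodule W generated by 1 consists of polynomials. Conversely, suppose W contains
  all polynomials of degree at most n and let F be one of them. A shift Yi \<mapsto> Yi - 1 changes
  F only by terms of lower degree, so H0 F = (X1 + X2) F, while H1 F agrees with
  (\<lambda>1 X1 + \<lambda>2 X2) F modulo W; as \<lambda>1 \<noteq> \<lambda>2 both X1 F and X2 F lie in W. In the same way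
  L0 F = (Y1 + Y2) F and L1 F, which agrees with
  (\<lambda>1 Y1 + \<lambda>2 Y2) F - (\<lambda>1 X1 + \<lambda>2 X2) F + (\<lambda>1 \<eta>1 + \<lambda>2 \<eta>2) F modulo W, give
  Y1 F and Y2 F.
\<close>

definition tvars :: "tvec set" where
  "tvars = {\<lambda>p q. fst p, \<lambda>p q. snd p, \<lambda>p q. fst q, \<lambda>p q. snd q}"

inductive poly_deg_le :: "nat \<Rightarrow> tvec \<Rightarrow> bool" where
  const: "poly_deg_le n (\<lambda>p q. c)"
| add: "poly_deg_le n F \<Longrightarrow> poly_deg_le n G \<Longrightarrow> poly_deg_le n (\<lambda>p q. F p q + G p q)"
| smult: "poly_deg_le n F \<Longrightarrow> poly_deg_le n (\<lambda>p q. c * F p q)"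
| mult_var: "v \<in> tvars \<Longrightarrow> poly_deg_le n F \<Longrightarrow> poly_deg_le (Suc n) (\<lambda>p q. v p q * F p q)"
| Suc: "poly_deg_le n F \<Longrightarrow> poly_deg_le (Suc n) F"

definition translate :: "complex \<times> complex \<Rightarrow> complex \<times> complex \<Rightarrow> tvec \<Rightarrow> tvec" where
  "translate a b F = (\<lambda>p q. F (p - a) (q - b))"

lemma poly_deg_le_mono: "poly_deg_le m F \<Longrightarrow> m \<le> n \<Longrightarrow> poly_deg_le n F"
  by (induction n) (auto intro: poly_deg_le.Suc simp: le_Suc_eq)

lemma poly_deg_le_var: "v \<in> tvars \<Longrightarrow> poly_deg_le 1 v"
  using poly_deg_le.mult_var[OF _ poly_deg_le.const[of 0 1]] by simp

lemma poly_deg_le_diff: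
  "poly_deg_le n F \<Longrightarrow> poly_deg_le n G \<Longrightarrow> poly_deg_le n (\<lambda>p q. F p q - G p q)"
  using poly_deg_le.add[OF _ poly_deg_le.smult[of n G "-1"]] by simp

lemma poly_deg_le_mult:
  assumes "poly_deg_le n F" and G: "poly_deg_le m G"
  shows "poly_deg_le (n + m) (\<lambda>p q. F p q * G p q)"
  using assms(1)
proof induction
  case (const n c)
  show ?case by (rule poly_deg_le_mono[OF poly_deg_le.smult[OF G]]) simp
next
  case (add n F1 F2)
  then show ?case using poly_deg_le.add by (simp add: distrib_right)
next
  case (smult n F c)
  then show ?case using poly_deg_le.smult by (simp add: mult.assoc)
next
  case (mult_var v n F)
  then show ?case using poly_deg_le.mult_var by (simp add: mult.assoc)
next
  case (Suc n F)
  then show ?case using poly_deg_le.Suc by simp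
qed

lemma poly_deg_le_power: "poly_deg_le n F \<Longrightarrow> poly_deg_le (n * k) (\<lambda>p q. F p q ^ k)"
  by (induction k) (auto intro: poly_deg_le.const dest: poly_deg_le_mult)

lemma poly_deg_le_sum:
  "finite A \<Longrightarrow> (\<And>i. i \<in> A \<Longrightarrow> \<exists>n. poly_deg_le n (h i)) \<Longrightarrow>
    \<exists>n. poly_deg_le n (\<lambda>p q. \<Sum>i\<in>A. h i p q)"
proof (induction rule: finite_induct)
  case empty
  show ?case using poly_deg_le.const[of 0 0] by auto
next
  case (insert i A)
  then obtain n m where "poly_deg_le n (h i)" "poly_deg_le m (\<lambda>p q. \<Sum>i\<in>A. h i p q)"
    by blast
  then have "poly_deg_le (max n m) (\<lambda>p q. h i p q + (\<Sum>i\<in>A. h i p q))"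
    by (intro poly_deg_le.add) (auto elim: poly_deg_le_mono)
  then show ?case using insert.hyps by auto
qed

lemma tvars_translate: "v \<in> tvars \<Longrightarrow> \<exists>c. \<forall>p q. v (p - a) (q - b) = v p q - c"
  by (auto simp: tvars_def)

lemma poly_deg_le_translate: "poly_deg_le n F \<Longrightarrow> poly_deg_le n (translate a b F)"
proof (induction rule: poly_deg_le.induct)
  case (mult_var v n F)
  obtain c where v_shift: "\<And>p q. v (p - a) (q - b) = v p q - c"
    using tvars_translate[OF mult_var.hyps(1)] by blast
  have "translate a b (\<lambda>p q. v p q * F p q)
      = (\<lambda>p q. v p q * translate a b F p q - c * translate a b F p q)"
    unfolding translate_def v_shift by (simp add: algebra_simps)
  moreover have "poly_deg_le (Suc n)
      (\<lambda>p q. v p q * translate a b F p q - c * translate a b F p q)"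
    by (intro poly_deg_le_diff poly_deg_le.mult_var poly_deg_le.Suc poly_deg_le.smult mult_var)
  ultimately show ?case by simp
qed (auto simp: translate_def intro: poly_deg_le.intros)

(* F (p - a) (q - b) - F p q has degree below n; the factor w of degree one says so without n - 1. *)
lemma poly_deg_le_mult_translate_diff:
  assumes w: "poly_deg_le 1 w" and "poly_deg_le n F"
  shows "poly_deg_le n (\<lambda>p q. w p q * (translate a b F p q - F p q))"
  using assms(2)
proof induction
  case (const n c)
  show ?case using poly_deg_le.const[of n 0] by (simp add: translate_def)
next
  case (add n F G)
  show ?case using poly_deg_le.add[OF add.IH] by (simp add: translate_def algebra_simps)
next
  case (smult n F c)
  show ?case using poly_deg_le.smult[OF smult.IH, of c] by (simp add: translate_def algebra_simps)
next
  case (mult_var v n F)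
  obtain c where v_shift: "\<And>p q. v (p - a) (q - b) = v p q - c"
    using tvars_translate[OF mult_var.hyps(1)] by blast
  have "(\<lambda>p q. w p q * (translate a b (\<lambda>p q. v p q * F p q) p q - v p q * F p q))
      = (\<lambda>p q. v p q * (w p q * (translate a b F p q - F p q)) - c * (w p q * translate a b F p q))"
    unfolding translate_def v_shift by (simp add: algebra_simps)
  moreover have "poly_deg_le (Suc n) (\<lambda>p q. w p q * translate a b F p q)"
    using poly_deg_le_mult[OF w poly_deg_le_translate[OF mult_var.hyps(2)]] by simp
  ultimately show ?case
    using mult_var by (auto intro: poly_deg_le_diff poly_deg_le.mult_var poly_deg_le.smult)
next
  case (Suc n F)
  show ?case by (rule poly_deg_le.Suc[OF Suc.IH])
qed

lemma poly_deg_le_affine: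
  "poly_deg_le 1 (\<lambda>p q. a1 * fst p + b1 * snd p + a2 * fst q + b2 * snd q + c)"
  by (intro poly_deg_le.add poly_deg_le.smult poly_deg_le_var poly_deg_le.const)
     (simp_all add: tvars_def)

lemma tensor_act_L:
  "tensor_act l1 e1 s1 l2 e2 s2 (L m) F = (\<lambda>p q.
     l1 powi m * (snd p - of_int m * fst p + of_int m * e1) * translate (0, of_int m) 0 F p q
   + l2 powi m * (snd q - of_int m * fst q + of_int m * e2) * translate 0 (0, of_int m) F p q)"
  by (simp add: tensor_act_def translate_def minus_prod_def split_beta)

lemma tensor_act_H:
  "tensor_act l1 e1 s1 l2 e2 s2 (H m) F = (\<lambda>p q.
     l1 powi m * fst p * translate (0, of_int m) 0 F p q
   + l2 powi m * fst q * translate 0 (0, of_int m) F p q)"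
  by (simp add: tensor_act_def translate_def minus_prod_def split_beta)

lemma tensor_act_I:
  "tensor_act l1 e1 s1 l2 e2 s2 (I m) F = (\<lambda>p q.
     l1 powi m * s1 * translate (1, of_int m) 0 F p q
   + l2 powi m * s2 * translate 0 (1, of_int m) F p q)"
  by (simp add: tensor_act_def translate_def minus_prod_def split_beta)

lemma poly_deg_le_tensor_act:
  assumes F: "poly_deg_le n F"
  shows "poly_deg_le (Suc n) (tensor_act l1 e1 s1 l2 e2 s2 x F)"
proof (cases x)
  case (L m)
  have aff1: "poly_deg_le (Suc n) (\<lambda>p q. (snd p - of_int m * fst p + of_int m * e1) * translate a b F p q)"
    for a b
    using poly_deg_le_mult[OF poly_deg_le_affine[of "- of_int m" 1 0 0 "of_int m * e1"]
        poly_deg_le_translate[OF F]]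
    by simp
  have aff2: "poly_deg_le (Suc n) (\<lambda>p q. (snd q - of_int m * fst q + of_int m * e2) * translate a b F p q)"
    for a b
    using poly_deg_le_mult[OF poly_deg_le_affine[of 0 0 "- of_int m" 1 "of_int m * e2"]
        poly_deg_le_translate[OF F]]
    by simp
  show ?thesis
    unfolding L tensor_act_L mult.assoc
    by (rule poly_deg_le.add[OF poly_deg_le.smult[OF aff1] poly_deg_le.smult[OF aff2]])
next
  case (H m)
  have "poly_deg_le (Suc n) (\<lambda>p q. v p q * translate a b F p q)" if "v \<in> tvars" for v a b
    by (rule poly_deg_le.mult_var[OF that poly_deg_le_translate[OF F]])
  then show ?thesis
    unfolding H tensor_act_H mult.assoc
    by (intro poly_deg_le.add poly_deg_le.smult) (simp_all add: tvars_def)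
next
  case (I m)
  show ?thesis
    unfolding I tensor_act_I
    by (intro poly_deg_le.Suc poly_deg_le.add poly_deg_le.smult poly_deg_le_translate F)
next
  case (J m)
  then show ?thesis using poly_deg_le.const[of _ 0] by (simp add: tensor_act_def)
qed

lemma gen_submodule_poly_deg_le:
  "F \<in> gen_submodule (tensor_act l1 e1 s1 l2 e2 s2) (\<lambda>p q. 1) \<Longrightarrow> \<exists>n. poly_deg_le n F"
proof (induction rule: gen_submodule.induct)
  case (add F G)
  then obtain n m where "poly_deg_le n F" "poly_deg_le m G" by blast
  then have "poly_deg_le (max n m) (\<lambda>p q. F p q + G p q)"
    by (intro poly_deg_le.add) (auto elim: poly_deg_le_mono)
  then show ?case by blast
qed (auto intro: poly_deg_le.const poly_deg_le.smult poly_deg_le_tensor_act)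

lemma sum_lessThan_add:
  "(\<Sum>i<n + m. h i) = (\<Sum>i<n. h i) + (\<Sum>i<m. h (n + i))" for h :: "nat \<Rightarrow> 'a::comm_monoid_add"
  by (induction m) (simp_all add: add.assoc)

lemma poly2_rectI:
  fixes n m :: nat and c :: "nat \<Rightarrow> nat \<Rightarrow> complex"
  shows "poly2 (\<lambda>(x, y). \<Sum>i\<le>n. \<Sum>j\<le>m. c i j * x ^ i * y ^ j)"
proof -
  let ?N = "max n m"
  let ?c = "\<lambda>i j. if i \<le> n \<and> j \<le> m then c i j else 0"
  have "(\<Sum>i\<le>?N. \<Sum>j\<le>?N. ?c i j * x ^ i * y ^ j)
      = (\<Sum>i\<le>?N. if i \<le> n then \<Sum>j\<le>?N. if j \<le> m then c i j * x ^ i * y ^ j else 0 else 0)"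
    for x y by (auto intro!: sum.cong)
  also have "\<dots> x y = (\<Sum>i\<le>n. \<Sum>j\<le>m. c i j * x ^ i * y ^ j)" for x y
  proof -
    have "{..?N} \<inter> {i. i \<le> n} = {..n}" "{..?N} \<inter> {j. j \<le> m} = {..m}" by auto
    then show ?thesis by (simp add: sum.If_cases)
  qed
  finally show ?thesis
    unfolding poly2_def by (intro exI[of _ ?N] exI[of _ ?c]) auto
qed

lemma poly2_const: "poly2 (\<lambda>_. c)"
  using poly2_rectI[where n=0 and m=0 and c="\<lambda>_ _. c"] by (simp add: case_prod_beta')

lemma poly2_smult: "poly2 f \<Longrightarrow> poly2 (\<lambda>z. a * f z)"
  unfolding poly2_def
  by (auto simp: fun_eq_iff sum_distrib_left mult.assoc intro!: exI[of _ "\<lambda>i j. a * _ i j"])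

lemma poly2_mult_fst: "poly2 f \<Longrightarrow> poly2 (\<lambda>z. fst z * f z)"
proof -
  assume "poly2 f"
  then obtain N c where f: "f = (\<lambda>(x, y). \<Sum>i\<le>N. \<Sum>j\<le>N. c i j * x ^ i * y ^ j)"
    unfolding poly2_def by blast
  let ?c = "\<lambda>i j. case i of 0 \<Rightarrow> 0 | Suc i \<Rightarrow> c i j"
  have "(\<lambda>z. fst z * f z) = (\<lambda>(x, y). \<Sum>i\<le>Suc N. \<Sum>j\<le>N. ?c i j * x ^ i * y ^ j)"
    unfolding f
    by (simp del: sum.atMost_Suc add: fun_eq_iff sum.atMost_Suc_shift sum_distrib_left mult_ac)
  then show ?thesis by (simp only: poly2_rectI)
qed

lemma poly2_mult_snd: "poly2 f \<Longrightarrow> poly2 (\<lambda>z. snd z * f z)"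
proof -
  assume "poly2 f"
  then obtain N c where f: "f = (\<lambda>(x, y). \<Sum>i\<le>N. \<Sum>j\<le>N. c i j * x ^ i * y ^ j)"
    unfolding poly2_def by blast
  let ?c = "\<lambda>i j. case j of 0 \<Rightarrow> 0 | Suc j \<Rightarrow> c i j"
  have "(\<lambda>z. snd z * f z) = (\<lambda>(x, y). \<Sum>i\<le>N. \<Sum>j\<le>Suc N. ?c i j * x ^ i * y ^ j)"
    unfolding f
    by (simp del: sum.atMost_Suc add: fun_eq_iff sum.atMost_Suc_shift sum_distrib_left mult_ac)
  then show ?thesis by (simp only: poly2_rectI)
qed

lemma tensor_spaceI:
  "\<forall>i<(n::nat). poly2 (f i) \<and> poly2 (g i) \<Longrightarrow> F = (\<lambda>p q. \<Sum>i<n. f i p * g i q) \<Longrightarrow>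
    F \<in> tensor_space"
  unfolding tensor_space_def by blast

lemma tensor_spaceE:
  assumes "F \<in> tensor_space"
  obtains n f g where "\<forall>i<(n::nat). poly2 (f i) \<and> poly2 (g i)"
    and "F = (\<lambda>p q. \<Sum>i<n. f i p * g i q)"
  using assms unfolding tensor_space_def by blast

lemma tensor_space_const: "(\<lambda>p q. c) \<in> tensor_space"
  by (rule tensor_spaceI[of "Suc 0" "\<lambda>_ _. c" "\<lambda>_ _. 1"]) (auto simp: poly2_const)

lemma tensor_space_add:
  assumes "F \<in> tensor_space" and "G \<in> tensor_space"
  shows "(\<lambda>p q. F p q + G p q) \<in> tensor_space"
proof -
  obtain n :: nat and f g where F: "\<forall>i<n. poly2 (f i) \<and> poly2 (g i)"
    "F = (\<lambda>p q. \<Sum>i<n. f i p * g i q)"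
    using assms(1) by (rule tensor_spaceE)
  obtain m :: nat and f' g' where G: "\<forall>i<m. poly2 (f' i) \<and> poly2 (g' i)"
    "G = (\<lambda>p q. \<Sum>i<m. f' i p * g' i q)"
    using assms(2) by (rule tensor_spaceE)
  show ?thesis
    by (rule tensor_spaceI[of "n + m" "\<lambda>i. if i < n then f i else f' (i - n)"
          "\<lambda>i. if i < n then g i else g' (i - n)"])
      (use F G in \<open>auto simp: sum_lessThan_add\<close>)
qed

lemma tensor_space_smult:
  assumes "F \<in> tensor_space"
  shows "(\<lambda>p q. c * F p q) \<in> tensor_space"
proof -
  obtain n :: nat and f g where fg: "\<forall>i<n. poly2 (f i) \<and> poly2 (g i)"
    and F: "F = (\<lambda>p q. \<Sum>i<n. f i p * g i q)"
    using assms by (rule tensor_spaceE)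
  show ?thesis
    by (rule tensor_spaceI[of n "\<lambda>i p. c * f i p" g])
       (use fg in \<open>auto simp: F poly2_smult sum_distrib_left mult.assoc\<close>)
qed

lemma tensor_space_mult_var:
  assumes "v \<in> tvars" and "F \<in> tensor_space"
  shows "(\<lambda>p q. v p q * F p q) \<in> tensor_space"
proof -
  obtain n :: nat and f g where fg: "\<forall>i<n. poly2 (f i) \<and> poly2 (g i)"
    and F: "F = (\<lambda>p q. \<Sum>i<n. f i p * g i q)"
    using assms(2) by (rule tensor_spaceE)
  have "(\<lambda>p q. u p * F p q) \<in> tensor_space" if "u = fst \<or> u = snd" for u
    by (rule tensor_spaceI[of n "\<lambda>i p. u p * f i p" g])
       (use fg that in \<open>auto simp: F poly2_mult_fst poly2_mult_snd sum_distrib_left mult.assoc\<close>)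
  moreover have "(\<lambda>p q. u q * F p q) \<in> tensor_space" if "u = fst \<or> u = snd" for u
    by (rule tensor_spaceI[of n f "\<lambda>i q. u q * g i q"])
       (use fg that in \<open>auto simp: F poly2_mult_fst poly2_mult_snd sum_distrib_left mult_ac\<close>)
  ultimately show ?thesis
    using assms(1) unfolding tvars_def by auto
qed

lemma poly_deg_le_imp_tensor_space: "poly_deg_le n F \<Longrightarrow> F \<in> tensor_space"
  by (induction rule: poly_deg_le.induct)
     (auto intro: tensor_space_const tensor_space_add tensor_space_smult tensor_space_mult_var)

lemma poly_deg_le_poly2_comp:
  assumes "poly2 f" and "poly_deg_le 1 u" and "poly_deg_le 1 w"
  shows "\<exists>n. poly_deg_le n (\<lambda>p q. f (u p q, w p q))"
proof -
  obtain N c where f: "f = (\<lambda>(x, y). \<Sum>i\<le>N. \<Sum>j\<le>N. c i j * x ^ i * y ^ j)"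
    using assms(1) unfolding poly2_def by blast
  have monomial: "poly_deg_le (i + j) (\<lambda>p q. c i j * u p q ^ i * w p q ^ j)" for i j
    using poly_deg_le_mult[OF poly_deg_le.smult[OF poly_deg_le_power[OF assms(2)]]
        poly_deg_le_power[OF assms(3)]]
    by simp
  have row: "\<exists>n. poly_deg_le n (\<lambda>p q. \<Sum>j\<le>N. c i j * u p q ^ i * w p q ^ j)" for i
    by (rule poly_deg_le_sum[OF finite_atMost]) (use monomial in blast)
  have "\<exists>n. poly_deg_le n (\<lambda>p q. \<Sum>i\<le>N. \<Sum>j\<le>N. c i j * u p q ^ i * w p q ^ j)"
    by (rule poly_deg_le_sum[OF finite_atMost]) (rule row)
  then show ?thesis
    by (simp add: f)
qed

lemma tensor_space_imp_poly_deg_le: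
  assumes "F \<in> tensor_space"
  shows "\<exists>n. poly_deg_le n F"
proof -
  obtain n :: nat and f g where fg: "\<forall>i<n. poly2 (f i) \<and> poly2 (g i)"
    and F: "F = (\<lambda>p q. \<Sum>i<n. f i p * g i q)"
    using assms by (rule tensor_spaceE)
  have coords: "poly_deg_le 1 (\<lambda>p q. fst p)" "poly_deg_le 1 (\<lambda>p q. snd p)"
    "poly_deg_le 1 (\<lambda>p q. fst q)" "poly_deg_le 1 (\<lambda>p q. snd q)"
    by (rule poly_deg_le_var, simp add: tvars_def)+
  have "\<exists>d. poly_deg_le d (\<lambda>p q. f i p * g i q)" if i: "i < n" for i
  proof -
    obtain a b where "poly_deg_le a (\<lambda>p q. f i (fst p, snd p))"
      and "poly_deg_le b (\<lambda>p q. g i (fst q, snd q))"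
      using poly_deg_le_poly2_comp[OF _ coords(1,2)] poly_deg_le_poly2_comp[OF _ coords(3,4)] fg i
      by blast
    from poly_deg_le_mult[OF this] show ?thesis by auto
  qed
  then show ?thesis
    unfolding F by (rule poly_deg_le_sum[OF finite_lessThan]) simp
qed

lemma tensor_space_eq: "tensor_space = {F. \<exists>n. poly_deg_le n F}"
  using poly_deg_le_imp_tensor_space tensor_space_imp_poly_deg_le by blast

lemma gen_submodule_lincomb:
  "a \<in> gen_submodule act v \<Longrightarrow> b \<in> gen_submodule act v \<Longrightarrow>
    (\<lambda>p q. x * a p q + y * b p q) \<in> gen_submodule act v"
  by (intro gen_submodule.add gen_submodule.smult)

lemma gen_submodule_add_cancel:
  assumes "a \<in> gen_submodule act v" and "(\<lambda>p q. a p q + b p q) \<in> gen_submodule act v"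
  shows "b \<in> gen_submodule act v"
proof -
  have "(\<lambda>p q. (-1) * a p q + 1 * (a p q + b p q)) = b"
    by (simp add: fun_eq_iff)
  with gen_submodule_lincomb[OF assms, of "-1" 1] show ?thesis by simp
qed

lemma gen_submodule_separate:
  assumes "c \<noteq> d"
    and sum: "(\<lambda>p q. U p q + W p q) \<in> gen_submodule act v"
    and weighted: "(\<lambda>p q. c * U p q + d * W p q) \<in> gen_submodule act v"
  shows "U \<in> gen_submodule act v" and "W \<in> gen_submodule act v"
proof -
  have solve: "(1 / (x - y)) * (x * u + y * w) + (- y / (x - y)) * (u + w) = u"
    if "x \<noteq> y" for x y u w :: complex
  proof -
    have "(1 / (x - y)) * (x * u + y * w) + (- y / (x - y)) * (u + w) = ((x - y) * u) / (x - y)"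
      by (simp add: divide_inverse algebra_simps)
    also have "\<dots> = u" using that by simp
    finally show ?thesis .
  qed
  have U_eq: "U = (\<lambda>p q. (1 / (c - d)) * (c * U p q + d * W p q) + (- d / (c - d)) * (U p q + W p q))"
    using solve[OF assms(1)] by simp
  have W_eq: "W = (\<lambda>p q. (1 / (d - c)) * (c * U p q + d * W p q) + (- c / (d - c)) * (U p q + W p q))"
    using solve[of d c "W _ _" "U _ _", OF assms(1)[symmetric]] by (simp only: add.commute)
  show "U \<in> gen_submodule act v"
    using gen_submodule_lincomb[OF weighted sum, of "1 / (c - d)" "- d / (c - d)"]
    by (simp only: U_eq[symmetric])
  show "W \<in> gen_submodule act v"
    using gen_submodule_lincomb[OF weighted sum, of "1 / (d - c)" "- c / (d - c)"]
    by (simp only: W_eq[symmetric])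
qed

context
  fixes l1 l2 s1 s2 e1 e2 :: complex
  assumes distinct: "l1 \<noteq> l2"
begin

abbreviation gen_one :: "tvec set" where
  "gen_one \<equiv> gen_submodule (tensor_act l1 e1 s1 l2 e2 s2) (\<lambda>p q. 1)"

lemma mult_fst_mem_gen_one:
  assumes IH: "\<And>G. poly_deg_le n G \<Longrightarrow> G \<in> gen_one" and F: "poly_deg_le n F"
  shows "(\<lambda>p q. fst p * F p q) \<in> gen_one" and "(\<lambda>p q. fst q * F p q) \<in> gen_one"
proof -
  have "tensor_act l1 e1 s1 l2 e2 s2 (H 0) F \<in> gen_one"
    by (rule gen_submodule.act[OF IH[OF F]])
  then have sum: "(\<lambda>p q. fst p * F p q + fst q * F p q) \<in> gen_one"
    by (simp add: tensor_act_H translate_def minus_prod_def)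
  let ?R = "\<lambda>p q. l1 * (fst p * (translate (0, 1) 0 F p q - F p q))
    + l2 * (fst q * (translate 0 (0, 1) F p q - F p q))"
  have R: "?R \<in> gen_one"
    by (intro IH poly_deg_le.add poly_deg_le.smult poly_deg_le_mult_translate_diff F poly_deg_le_var)
       (simp_all add: tvars_def)
  have "tensor_act l1 e1 s1 l2 e2 s2 (H 1) F \<in> gen_one"
    by (rule gen_submodule.act[OF IH[OF F]])
  also have "tensor_act l1 e1 s1 l2 e2 s2 (H 1) F
      = (\<lambda>p q. ?R p q + (l1 * (fst p * F p q) + l2 * (fst q * F p q)))"
    by (simp add: tensor_act_H fun_eq_iff algebra_simps)
  finally have weighted: "(\<lambda>p q. l1 * (fst p * F p q) + l2 * (fst q * F p q)) \<in> gen_one"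
    by (rule gen_submodule_add_cancel[OF R])
  show "(\<lambda>p q. fst p * F p q) \<in> gen_one" "(\<lambda>p q. fst q * F p q) \<in> gen_one"
    using gen_submodule_separate[OF distinct sum weighted] by auto
qed

lemma mult_snd_mem_gen_one:
  assumes IH: "\<And>G. poly_deg_le n G \<Longrightarrow> G \<in> gen_one" and F: "poly_deg_le n F"
  shows "(\<lambda>p q. snd p * F p q) \<in> gen_one" and "(\<lambda>p q. snd q * F p q) \<in> gen_one"
proof -
  have "tensor_act l1 e1 s1 l2 e2 s2 (L 0) F \<in> gen_one"
    by (rule gen_submodule.act[OF IH[OF F]])
  then have sum: "(\<lambda>p q. snd p * F p q + snd q * F p q) \<in> gen_one"
    by (simp add: tensor_act_L translate_def minus_prod_def)
  let ?R = "\<lambda>p q. l1 * ((snd p - fst p + e1) * (translate (0, 1) 0 F p q - F p q))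
    + l2 * ((snd q - fst q + e2) * (translate 0 (0, 1) F p q - F p q))"
  let ?X = "\<lambda>p q. l1 * (fst p * F p q) + l2 * (fst q * F p q)"
  let ?Z = "\<lambda>p q. 1 * (1 * ?R p q + (-1) * ?X p q) + (l1 * e1 + l2 * e2) * F p q"
  have affine: "poly_deg_le 1 (\<lambda>p q. snd p - fst p + e1)" "poly_deg_le 1 (\<lambda>p q. snd q - fst q + e2)"
    using poly_deg_le_affine[of "-1" 1 0 0 e1] poly_deg_le_affine[of 0 0 "-1" 1 e2] by simp_all
  have R: "?R \<in> gen_one"
    by (intro IH poly_deg_le.add poly_deg_le.smult poly_deg_le_mult_translate_diff F affine)
  have X: "?X \<in> gen_one"
    using mult_fst_mem_gen_one[OF IH F] by (rule gen_submodule_lincomb)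
  have Z: "?Z \<in> gen_one"
    by (rule gen_submodule_lincomb[OF gen_submodule_lincomb[OF R X] IH[OF F]])
  have "tensor_act l1 e1 s1 l2 e2 s2 (L 1) F \<in> gen_one"
    by (rule gen_submodule.act[OF IH[OF F]])
  also have "tensor_act l1 e1 s1 l2 e2 s2 (L 1) F
      = (\<lambda>p q. ?Z p q + (l1 * (snd p * F p q) + l2 * (snd q * F p q)))"
    by (simp add: tensor_act_L fun_eq_iff algebra_simps)
  finally have weighted: "(\<lambda>p q. l1 * (snd p * F p q) + l2 * (snd q * F p q)) \<in> gen_one"
    by (rule gen_submodule_add_cancel[OF Z])
  show "(\<lambda>p q. snd p * F p q) \<in> gen_one" "(\<lambda>p q. snd q * F p q) \<in> gen_one"
    using gen_submodule_separate[OF distinct sum weighted] by auto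
qed

lemma mult_var_mem_gen_one:
  assumes "\<And>G. poly_deg_le n G \<Longrightarrow> G \<in> gen_one" and "poly_deg_le n F" and "v \<in> tvars"
  shows "(\<lambda>p q. v p q * F p q) \<in> gen_one"
  using mult_fst_mem_gen_one[OF assms(1,2)] mult_snd_mem_gen_one[OF assms(1,2)] assms(3)
  unfolding tvars_def by auto

lemma poly_deg_le_mem_gen_one: "poly_deg_le n G \<Longrightarrow> G \<in> gen_one"
proof (induction n arbitrary: G rule: less_induct)
  case (less n)
  from less.prems less.IH show ?case
  proof (induction rule: poly_deg_le.induct)
    case (const n c)
    have "(\<lambda>p q. c * 1) \<in> gen_one"
      by (rule gen_submodule.smult[OF gen_submodule.base])
    then show ?case by simp
  next
    case (mult_var v n F)
    then show ?case using mult_var_mem_gen_one[of n F v] by blast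
  qed (auto intro: gen_submodule.add gen_submodule.smult)
qed

end

theorem proposition4p3:
  fixes l1 l2 s1 s2 e1 e2 :: complex
  assumes "l1 \<noteq> 0" and "l2 \<noteq> 0" and "s1 \<noteq> 0" and "s2 \<noteq> 0" and "l1 \<noteq> l2"
  shows "gen_submodule (tensor_act l1 e1 s1 l2 e2 s2) (\<lambda>p q. 1) = tensor_space"
  using gen_submodule_poly_deg_le poly_deg_le_mem_gen_one[OF assms(5)]
  unfolding tensor_space_eq by blast

end
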